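(* Let $f\in\mathcal S_{\mathbf M}$, let $\|\cdot\|$ be either the Luxemburg norm $\|\cdot\|_{\mathbf M}$ or the Orlicz norm $\|\cdot\|^*_{\mathbf M}$ (the same choice throughout), and let $\varphi\in\Phi$ and $\tau>0$ be such that $\varphi$ is nondecreasing on $[0,\tau]$ and $\varphi(\tau)=\max\{\varphi(t):t\in\mathbb R\}$. Then for any $n\in\mathbb N$, $$\omega_\varphi\Big(f,\frac{\tau}{n}\Big)\le\sum_{\nu=1}^n\Big(\varphi\Big(\frac{\tau\nu}{n}\Big)-\varphi\Big(\frac{\tau(\nu-1)}{n}\Big)\Big)E_\nu(f).$$
   Context: $L$ is the space of $2\pi$-periodic Lebesgue integrable functions, with Fourier coefficients $\widehat f(k)=(2\pi)^{-1}\int_0^{2\pi}f(x)e^{-\mathrm{i}kx}\,dx$. Let $\mathbf M=\{M_k\}_{k\in\mathbb Z}$ be a sequence of Orlicz functions on $[0,\infty)$ (nondecreasing, convex, $M_k(0)=0$, $M_k(u)\to\infty$ as $u\to\infty$). For a complex sequence $c=\{c_k\}_{k\in\mathbb Z}$: Luxemburg norm $\|c\|_{\mathbf M}=\inf\{a>0:\sum_kM_k(|c_k|/a)\le1\}$; with $\tilde M_k(v)=\sup\{uv-M_k(u):u\ge0\}$ and $\Lambda$ the set of positive sequences $\lambda$ with $\sum_k\tilde M_k(\lambda_k)\le1$, Orlicz norm $\|c\|^*_{\mathbf M}=\sup\{\sum_k\lambda_k|c_k|:\lambda\in\Lambda\}$. $\mathcal S_{\mathbf M}$ is the space of $f\in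 L$ with $\|\{\widehat f(k)\}\|_{\mathbf M}<\infty$; norms of $f$ are those of $\{\widehat f(k)\}$. $E_\nu(f)=\inf\{\|f-t\|:t\in\mathcal T_{\nu-1}\}$, $\mathcal T_{\nu-1}$ the trigonometric polynomials $\sum_{|k|\le\nu-1}c_ke^{\mathrm{i}kx}$. $\Phi$ is the set of all continuous, bounded, nonnegative, even functions $\varphi:\mathbb R\to\mathbb R$ with $\varphi(0)=0$ such that $\{t:\varphi(t)=0\}$ has Lebesgue measure zero. For $h\in\mathbb R$, $\Delta_h^\varphi f$ is the sequence $\{\varphi(kh)\widehat f(k)\}_{k\in\mathbb Z}$ and $\omega_\varphi(f,\delta)=\sup_{|h|\le\delta}\|\Delta_h^\varphi f\|$. *)

theory Defs
  imports "HOL-Analysis.Analysis"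
begin

definition in_L :: "(real \<Rightarrow> complex) \<Rightarrow> bool" where
  "in_L f \<longleftrightarrow> (\<forall>x. f (x + 2 * pi) = f x) \<and> integrable (lebesgue_on {0..2*pi}) f"

definition fourier_coeff :: "(real \<Rightarrow> complex) \<Rightarrow> int \<Rightarrow> complex" where
  "fourier_coeff f k = complex_of_real (1 / (2 * pi)) *
     (LINT x | lebesgue_on {0..2*pi}. f x * exp (- (\<i> * of_int k * of_real x)))"

definition orlicz_fun :: "(real \<Rightarrow> real) \<Rightarrow> bool" where
  "orlicz_fun g \<longleftrightarrow> g 0 = 0 \<and> mono_on {0..} g \<and> convex_on {0..} g \<and> filterlim g at_top at_top"

text \<open>Luxemburg norm (value \<infinity> when no admissible a exists).\<close>
definition lux_norm :: "(int \<Rightarrow> real \<Rightarrow> real) \<Rightarrow> (int \<Rightarrow> complex) \<Rightarrow> ennreal" where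
  "lux_norm M c = Inf {ennreal a | a. a > 0 \<and>
      (\<Sum>\<^sub>\<infinity>k. ennreal (M k (norm (c k) / a))) \<le> 1}"

definition compl_fun :: "(real \<Rightarrow> real) \<Rightarrow> real \<Rightarrow> ereal" where
  "compl_fun g v = (SUP u\<in>{0..}. ereal (u * v - g u))"

definition Lambda_set :: "(int \<Rightarrow> real \<Rightarrow> real) \<Rightarrow> (int \<Rightarrow> real) set" where
  "Lambda_set M = {lam. (\<forall>k. lam k > 0) \<and>
      (\<Sum>\<^sub>\<infinity>k. e2ennreal (compl_fun (M k) (lam k))) \<le> 1}"

definition orlicz_norm :: "(int \<Rightarrow> real \<Rightarrow> real) \<Rightarrow> (int \<Rightarrow> complex) \<Rightarrow> ennreal" where
  "orlicz_norm M c = (SUP lam\<in>Lambda_set M. \<Sum>\<^sub>\<infinity>k. ennreal (lam k * norm (c k)))"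

definition in_S :: "(int \<Rightarrow> real \<Rightarrow> real) \<Rightarrow> (real \<Rightarrow> complex) \<Rightarrow> bool" where
  "in_S M f \<longleftrightarrow> in_L f \<and> lux_norm M (fourier_coeff f) < \<infinity>"

definition trig_polys :: "nat \<Rightarrow> (real \<Rightarrow> complex) set" where
  "trig_polys m = {t. \<exists>c :: int \<Rightarrow> complex.
      t = (\<lambda>x. \<Sum>k\<in>{- int m..int m}. c k * exp (\<i> * of_int k * of_real x))}"

definition best_approx :: "((int \<Rightarrow> complex) \<Rightarrow> ennreal) \<Rightarrow> (real \<Rightarrow> complex) \<Rightarrow> nat \<Rightarrow> ennreal" where
  "best_approx N f \<nu> = (INF t\<in>trig_polys (\<nu> - 1). N (fourier_coeff (\<lambda>x. f x - t x)))"

definition Phi_class :: "(real \<Rightarrow> real) set" where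
  "Phi_class = {\<phi>. continuous_on UNIV \<phi> \<and> bounded (range \<phi>) \<and> (\<forall>t. \<phi> t \<ge> 0) \<and>
      (\<forall>t. \<phi> (- t) = \<phi> t) \<and> \<phi> 0 = 0 \<and> {t. \<phi> t = 0} \<in> null_sets lebesgue}"

definition Delta_phi :: "(real \<Rightarrow> real) \<Rightarrow> real \<Rightarrow> (real \<Rightarrow> complex) \<Rightarrow> int \<Rightarrow> complex" where
  "Delta_phi \<phi> h f = (\<lambda>k. complex_of_real (\<phi> (of_int k * h)) * fourier_coeff f k)"

definition modulus :: "((int \<Rightarrow> complex) \<Rightarrow> ennreal) \<Rightarrow> (real \<Rightarrow> real) \<Rightarrow> (real \<Rightarrow> complex) \<Rightarrow> real \<Rightarrow> ennreal" where
  "modulus N \<phi> f \<delta> = (SUP h\<in>{h. \<bar>h\<bar> \<le> \<delta>}. N (Delta_phi \<phi> h f))"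

end

theory Submission
  imports Defs
begin

text \<open>
  Put \<open>a\<^sub>\<nu> = \<phi>(\<tau>\<nu>/n) - \<phi>(\<tau>(\<nu>-1)/n) \<ge> 0\<close> and let \<open>|h| \<le> \<tau>/n\<close>. As \<open>\<phi>\<close> is even, nondecreasing
  on \<open>[0,\<tau>]\<close> and maximal at \<open>\<tau>\<close>, \<open>\<phi>(kh) \<le> \<phi>(\<tau> min(|k|,n)/n)\<close>, which telescopes to the sum of
  the \<open>a\<^sub>\<nu>\<close> with \<open>\<nu> \<le> min(|k|,n)\<close>. Subtracting a trigonometric polynomial \<open>T\<^sub>\<nu>\<close> of degree
  \<open>\<nu>-1\<close> leaves the Fourier coefficients of index \<open>|k| \<ge> \<nu>\<close> unchanged, so for every \<open>k\<close>
  the \<open>k\<close>-th entry of \<open>\<Delta>\<^sub>h\<^sup>\<phi> f\<close> is bounded in modulus by \<open>\<Sum>\<^sub>\<nu> a\<^sub>\<nu> |(f - T\<^sub>\<nu>)\<^sup>^(k)|\<close>.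
  Both norms respect such coefficientwise domination by nonnegative combinations; for the
  Luxemburg norm this is convexity of the \<open>M\<^sub>k\<close>: admissible scalings \<open>s\<^sub>\<nu>\<close> of the \<open>f - T\<^sub>\<nu>\<close>
  combine to the admissible scaling \<open>\<Sum> a\<^sub>\<nu> s\<^sub>\<nu>\<close>. Taking the infimum over the \<open>T\<^sub>\<nu>\<close> gives the bound.
\<close>

lemma ennreal_add_INF:
  fixes c :: ennreal
  shows "c + (INF i\<in>I. f i) = (INF i\<in>I. c + f i)"
proof (cases "I = {}")
  case False
  have "continuous (at_right (Inf (f ` I))) (\<lambda>x. c + x)"
    by (intro continuous_intros)
  then show ?thesis
    using continuous_at_Inf_mono[of "\<lambda>x. c + x" "f ` I"] False
    by (simp add: mono_def add_left_mono image_comp)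
qed simp

lemma ennreal_mult_INF:
  fixes w :: ennreal
  assumes "w \<noteq> \<infinity>" and "I \<noteq> {} \<or> w \<noteq> 0"
  shows "w * (INF i\<in>I. f i) = (INF i\<in>I. w * f i)"
proof (cases "I = {}")
  case True
  then show ?thesis using assms by (simp add: ennreal_mult_top)
next
  case False
  have "continuous_on UNIV (\<lambda>x. w * x)"
    using assms(1) by (intro ennreal_continuous_on_cmult continuous_on_id) (simp add: top.not_eq_extremum)
  then have "continuous (at_right (Inf (f ` I))) (\<lambda>x. w * x)"
    by (simp add: continuous_on_eq_continuous_at continuous_at_imp_continuous_at_within)
  then show ?thesis
    using continuous_at_Inf_mono[of "\<lambda>x. w * x" "f ` I"] False
    by (simp add: mono_def mult_left_mono image_comp)
qed

lemma le_add_sum_INF_ennreal: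
  fixes x c :: ennreal and g :: "'i \<Rightarrow> 'b \<Rightarrow> ennreal"
  assumes "finite I"
    and "\<And>T. (\<And>i. i \<in> I \<Longrightarrow> T i \<in> S i) \<Longrightarrow> x \<le> c + (\<Sum>i\<in>I. g i (T i))"
  shows "x \<le> c + (\<Sum>i\<in>I. INF t\<in>S i. g i t)"
  using assms
proof (induction I arbitrary: c rule: finite_induct)
  case empty
  then show ?case by simp
next
  case (insert j I)
  have "x \<le> (c + g j t) + (\<Sum>i\<in>I. INF t\<in>S i. g i t)" if t: "t \<in> S j" for t
  proof (rule insert.IH)
    fix T assume T: "\<And>i. i \<in> I \<Longrightarrow> T i \<in> S i"
    have "x \<le> c + (\<Sum>i\<in>insert j I. g i ((T(j := t)) i))"
      using T t by (intro insert.prems) auto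
    also have "(\<Sum>i\<in>insert j I. g i ((T(j := t)) i)) = g j t + (\<Sum>i\<in>I. g i (T i))"
      using insert.hyps by (auto intro!: sum.cong)
    finally show "x \<le> c + g j t + (\<Sum>i\<in>I. g i (T i))"
      by (simp add: add.assoc)
  qed
  then have "x \<le> (INF t\<in>S j. (c + (\<Sum>i\<in>I. INF t\<in>S i. g i t)) + g j t)"
    by (intro INF_greatest) (simp add: ac_simps)
  also have "\<dots> = (c + (\<Sum>i\<in>I. INF t\<in>S i. g i t)) + (INF t\<in>S j. g j t)"
    by (rule ennreal_add_INF[symmetric])
  also have "\<dots> = c + (\<Sum>i\<in>insert j I. INF t\<in>S i. g i t)"
    using insert.hyps by (simp add: ac_simps)
  finally show ?case .
qed

lemma le_sum_weighted_INF_ennreal: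
  fixes x :: ennreal and w :: "'i \<Rightarrow> ennreal" and h :: "'i \<Rightarrow> 'b \<Rightarrow> ennreal"
  assumes "finite I"
    and "\<And>i. i \<in> I \<Longrightarrow> w i \<noteq> \<infinity>"
    and "\<And>i. i \<in> I \<Longrightarrow> S i \<noteq> {} \<or> w i \<noteq> 0"
    and "\<And>T. (\<And>i. i \<in> I \<Longrightarrow> T i \<in> S i) \<Longrightarrow> x \<le> (\<Sum>i\<in>I. w i * h i (T i))"
  shows "x \<le> (\<Sum>i\<in>I. w i * (INF t\<in>S i. h i t))"
proof -
  have "x \<le> 0 + (\<Sum>i\<in>I. INF t\<in>S i. w i * h i t)"
    using assms(1) by (rule le_add_sum_INF_ennreal) (simp add: assms(4))
  also have "\<dots> = (\<Sum>i\<in>I. w i * (INF t\<in>S i. h i t))"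
    using assms(2,3) by (simp add: ennreal_mult_INF)
  finally show ?thesis .
qed

lemma sum_le_infsum_ennreal:
  fixes f :: "'a \<Rightarrow> ennreal"
  assumes "finite F"
  shows "sum f F \<le> (\<Sum>\<^sub>\<infinity>x. f x)"
proof -
  have "sum f F = (\<Sum>\<^sub>\<infinity>x\<in>F. f x)"
    using assms by simp
  also have "\<dots> \<le> (\<Sum>\<^sub>\<infinity>x. f x)"
    by (rule infsum_mono_neutral) (auto intro: nonneg_summable_on_complete)
  finally show ?thesis .
qed

lemma infsum_le_weighted_sum_ennreal:
  fixes f :: "'k \<Rightarrow> ennreal" and w :: "'i \<Rightarrow> ennreal" and g :: "'i \<Rightarrow> 'k \<Rightarrow> ennreal"
  assumes "finite I" and "\<And>k. f k \<le> (\<Sum>i\<in>I. w i * g i k)"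
  shows "(\<Sum>\<^sub>\<infinity>k. f k) \<le> (\<Sum>i\<in>I. w i * (\<Sum>\<^sub>\<infinity>k. g i k))"
proof (rule infsum_le_finite_sums)
  fix F :: "'k set" assume "finite F"
  have "sum f F \<le> (\<Sum>i\<in>I. w i * (\<Sum>k\<in>F. g i k))"
    using assms(2) by (subst sum_distrib_left, subst sum.swap) (rule sum_mono)
  also have "\<dots> \<le> (\<Sum>i\<in>I. w i * (\<Sum>\<^sub>\<infinity>k. g i k))"
    using \<open>finite F\<close> by (intro sum_mono mult_left_mono sum_le_infsum_ennreal) auto
  finally show "sum f F \<le> \<dots>" .
qed (auto intro: nonneg_summable_on_complete)

lemma ennreal_sum_mult:
  assumes "\<And>i. i \<in> I \<Longrightarrow> a i \<ge> 0" and "\<And>i. i \<in> I \<Longrightarrow> x i \<ge> 0"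
  shows "ennreal (\<Sum>i\<in>I. a i * x i) = (\<Sum>i\<in>I. ennreal (a i) * ennreal (x i))"
  using assms by (subst sum_ennreal[symmetric]) (auto intro!: sum.cong simp: ennreal_mult)

lemma has_integral_exp_int_period:
  fixes l :: int
  assumes "l \<noteq> 0"
  shows "((\<lambda>x::real. exp (\<i> * of_int l * of_real x)) has_integral 0) {0..2*pi}"
proof -
  define F where "F z = exp (\<i> * of_int l * z) / (\<i> * of_int l)" for z :: complex
  have "(F has_field_derivative exp (\<i> * of_int l * z)) (at z)" for z
    unfolding F_def using assms by (auto intro!: derivative_eq_intros simp: field_simps)
  then have "((\<lambda>x::real. exp (\<i> * of_int l * of_real x)) has_integral
               F (of_real (2*pi)) - F (of_real 0)) {0..2*pi}"
    by (intro fundamental_theorem_of_calculus) (auto intro!: has_vector_derivative_real_field)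
  moreover have "exp (\<i> * of_int l * of_real (2*pi)) = 1"
    using exp_integer_2pi[of "2 * of_int l"] by (simp add: algebra_simps)
  ultimately show ?thesis
    by (simp add: F_def)
qed

lemma trig_poly_mult_exp_high:
  assumes "t \<in> trig_polys m" and "\<bar>k\<bar> > int m"
  shows "integrable (lebesgue_on {0..2*pi}) (\<lambda>x. t x * exp (- (\<i> * of_int k * of_real x)))"
    and "(LINT x | lebesgue_on {0..2*pi}. t x * exp (- (\<i> * of_int k * of_real x))) = 0"
proof -
  obtain c where t: "t = (\<lambda>x. \<Sum>j\<in>{- int m..int m}. c j * exp (\<i> * of_int j * of_real x))"
    using assms(1) unfolding trig_polys_def by blast
  let ?g = "\<lambda>x. t x * exp (- (\<i> * of_int k * of_real x))"
  have g_eq: "?g x = (\<Sum>j\<in>{- int m..int m}. c j * exp (\<i> * of_int (j - k) * of_real x))" for x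
    unfolding t sum_distrib_right
    by (intro sum.cong refl) (simp add: mult.assoc algebra_simps flip: exp_add)
  have "(?g has_integral (\<Sum>j\<in>{- int m..int m}. c j * 0)) {0..2*pi}"
    unfolding g_eq using assms(2)
    by (intro has_integral_sum finite_atLeastAtMost ballI has_integral_mult_right
          has_integral_exp_int_period) auto
  then have "(?g has_integral 0) {0..2*pi}"
    by simp
  have "continuous_on {0..2*pi} ?g"
    unfolding t by (intro continuous_intros)
  then show integrable: "integrable (lebesgue_on {0..2*pi}) ?g"
    by (rule continuous_imp_integrable_real)
  have "(?g has_integral (LINT x | lebesgue_on {0..2*pi}. ?g x)) {0..2*pi}"
    using integrable by (rule has_integral_integral_lebesgue_on) simp
  with \<open>(?g has_integral 0) {0..2*pi}\<close> show "(LINT x | lebesgue_on {0..2*pi}. ?g x) = 0"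
    using has_integral_unique by blast
qed

text \<open>No integrability of \<open>f\<close> is needed: if \<open>f\<close> is not integrable against \<open>exp(-ikx)\<close>, neither is
  \<open>f - t\<close>, and both coefficients are the junk value \<open>0\<close>.\<close>
lemma fourier_coeff_diff_trig_poly:
  assumes "t \<in> trig_polys m" and "\<bar>k\<bar> > int m"
  shows "fourier_coeff (\<lambda>x. f x - t x) k = fourier_coeff f k"
proof -
  let ?e = "\<lambda>x::real. exp (- (\<i> * of_int k * of_real x))"
  note t_int = trig_poly_mult_exp_high[OF assms]
  have diff_eq: "(\<lambda>x. (f x - t x) * ?e x) = (\<lambda>x. f x * ?e x - t x * ?e x)"
    by (simp add: algebra_simps)
  have sum_eq: "(\<lambda>x. f x * ?e x) = (\<lambda>x. (f x - t x) * ?e x + t x * ?e x)"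
    by (simp add: algebra_simps)
  show ?thesis
  proof (cases "integrable (lebesgue_on {0..2*pi}) (\<lambda>x. f x * ?e x)")
    case True
    then show ?thesis
      using t_int by (simp add: fourier_coeff_def diff_eq)
  next
    case False
    then have "\<not> integrable (lebesgue_on {0..2*pi}) (\<lambda>x. (f x - t x) * ?e x)"
      using t_int(1) unfolding sum_eq by auto
    with False show ?thesis
      by (simp add: fourier_coeff_def not_integrable_integral_eq)
  qed
qed

lemma zero_in_trig_polys: "(\<lambda>_. 0) \<in> trig_polys m"
  unfolding trig_polys_def by (auto intro!: exI[of _ "\<lambda>_. 0"])

lemma orlicz_norm_le_weighted_sum:
  assumes "finite I" and a: "\<And>i. i \<in> I \<Longrightarrow> a i \<ge> 0"
    and dom: "\<And>k. norm (c k) \<le> (\<Sum>i\<in>I. a i * norm (d i k))"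
  shows "orlicz_norm M c \<le> (\<Sum>i\<in>I. ennreal (a i) * orlicz_norm M (d i))"
proof -
  have "(\<Sum>\<^sub>\<infinity>k. ennreal (lam k * norm (c k))) \<le> (\<Sum>i\<in>I. ennreal (a i) * orlicz_norm M (d i))"
    if lam_mem: "lam \<in> Lambda_set M" for lam
  proof -
    have lam: "lam k > 0" for k
      using lam_mem unfolding Lambda_set_def by auto
    have "ennreal (lam k * norm (c k)) \<le> (\<Sum>i\<in>I. ennreal (a i) * ennreal (lam k * norm (d i k)))" for k
    proof -
      have "lam k * norm (c k) \<le> (\<Sum>i\<in>I. a i * (lam k * norm (d i k)))"
        using mult_left_mono[OF dom[of k], of "lam k"] lam[of k]
        by (simp add: sum_distrib_left algebra_simps)
      then show ?thesis
        using a lam[of k] by (simp add: ennreal_leI flip: ennreal_sum_mult)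
    qed
    then have "(\<Sum>\<^sub>\<infinity>k. ennreal (lam k * norm (c k))) \<le>
               (\<Sum>i\<in>I. ennreal (a i) * (\<Sum>\<^sub>\<infinity>k. ennreal (lam k * norm (d i k))))"
      using \<open>finite I\<close> by (intro infsum_le_weighted_sum_ennreal)
    also have "\<dots> \<le> (\<Sum>i\<in>I. ennreal (a i) * orlicz_norm M (d i))"
      unfolding orlicz_norm_def using lam_mem by (intro sum_mono mult_left_mono SUP_upper) auto
    finally show ?thesis .
  qed
  then show ?thesis
    unfolding orlicz_norm_def[of M c] by (rule SUP_least)
qed

lemma orlicz_fun_nonneg: "orlicz_fun g \<Longrightarrow> u \<ge> 0 \<Longrightarrow> g u \<ge> 0"
  unfolding orlicz_fun_def by (metis atLeast_iff mono_onD order_refl)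

text \<open>Jensen's inequality with the weights \<open>a\<^sub>i s\<^sub>i / \<Sum>\<^sub>j a\<^sub>j s\<^sub>j\<close> at the points \<open>x\<^sub>i / s\<^sub>i\<close>.\<close>
lemma orlicz_fun_le_convex_comb:
  assumes g: "orlicz_fun g" and I: "finite I" "I \<noteq> {}"
    and a: "\<And>i. i \<in> I \<Longrightarrow> a i > 0" and s: "\<And>i. i \<in> I \<Longrightarrow> s i > 0"
    and x: "\<And>i. i \<in> I \<Longrightarrow> x i \<ge> 0"
    and u: "0 \<le> u" "u \<le> (\<Sum>i\<in>I. a i * x i)"
  shows "g (u / (\<Sum>i\<in>I. a i * s i)) \<le> (\<Sum>i\<in>I. a i * s i / (\<Sum>j\<in>I. a j * s j) * g (x i / s i))"
proof -
  define B where "B = (\<Sum>i\<in>I. a i * s i)"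
  define w where "w i = a i * s i / B" for i
  have "B > 0"
    unfolding B_def using I a s by (intro sum_pos) auto
  have w_nonneg: "w i \<ge> 0" if "i \<in> I" for i
    using a[OF that] s[OF that] \<open>B > 0\<close> unfolding w_def by simp
  have w_sum: "(\<Sum>i\<in>I. w i) = 1"
    using \<open>B > 0\<close> unfolding w_def by (simp add: B_def flip: sum_divide_distrib)
  have comb: "(\<Sum>i\<in>I. w i *\<^sub>R (x i / s i)) = (\<Sum>i\<in>I. a i * x i) / B"
    unfolding w_def sum_divide_distrib
  proof (intro sum.cong refl)
    fix i assume "i \<in> I"
    with s show "(a i * s i / B) *\<^sub>R (x i / s i) = a i * x i / B"
      by (simp add: less_imp_neq[symmetric])
  qed
  have "g (u / B) \<le> g ((\<Sum>i\<in>I. a i * x i) / B)"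
    using g u x a \<open>B > 0\<close> unfolding orlicz_fun_def
    by (intro mono_onD[of "{0..}" g]) (auto intro!: divide_right_mono sum_nonneg)
  also have "\<dots> \<le> (\<Sum>i\<in>I. w i * g (x i / s i))"
    unfolding comb[symmetric] using g I w_nonneg w_sum x s unfolding orlicz_fun_def
    by (intro convex_on_sum) (auto simp: less_imp_le)
  finally show ?thesis
    unfolding w_def B_def .
qed

definition lux_admissible :: "(int \<Rightarrow> real \<Rightarrow> real) \<Rightarrow> (int \<Rightarrow> complex) \<Rightarrow> real set" where
  "lux_admissible M c = {a. a > 0 \<and> (\<Sum>\<^sub>\<infinity>k. ennreal (M k (norm (c k) / a))) \<le> 1}"

lemma lux_norm_eq_INF: "lux_norm M c = (INF a\<in>lux_admissible M c. ennreal a)"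
  unfolding lux_norm_def lux_admissible_def by (rule arg_cong[where f = Inf]) auto

lemma lux_norm_zero:
  assumes "\<And>k. orlicz_fun (M k)"
  shows "lux_norm M (\<lambda>_. 0) = 0"
proof (rule antisym[OF ennreal_le_epsilon])
  fix e :: real assume "e > 0"
  with assms have "e \<in> lux_admissible M (\<lambda>_. 0)"
    unfolding lux_admissible_def orlicz_fun_def by simp
  then show "lux_norm M (\<lambda>_. 0) \<le> 0 + ennreal e"
    unfolding lux_norm_eq_INF by (simp add: INF_lower)
qed simp

lemma lux_admissible_weighted_sum:
  assumes M: "\<And>k. orlicz_fun (M k)" and I: "finite I" "I \<noteq> {}"
    and a: "\<And>i. i \<in> I \<Longrightarrow> a i > 0" and s: "\<And>i. i \<in> I \<Longrightarrow> s i \<in> lux_admissible M (d i)"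
    and dom: "\<And>k. norm (c k) \<le> (\<Sum>i\<in>I. a i * norm (d i k))"
  shows "(\<Sum>i\<in>I. a i * s i) \<in> lux_admissible M c"
proof -
  define B where "B = (\<Sum>i\<in>I. a i * s i)"
  define w where "w i = a i * s i / B" for i
  have s_pos: "s i > 0" if "i \<in> I" for i
    using s[OF that] unfolding lux_admissible_def by simp
  have "B > 0"
    unfolding B_def using I a s_pos by (intro sum_pos) auto
  have "ennreal (M k (norm (c k) / B)) \<le> (\<Sum>i\<in>I. ennreal (w i) * ennreal (M k (norm (d i k) / s i)))"
    for k
  proof -
    have "M k (norm (c k) / B) \<le> (\<Sum>i\<in>I. w i * M k (norm (d i k) / s i))"
      unfolding w_def B_def using M I a s_pos dom by (intro orlicz_fun_le_convex_comb) auto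
    then have "ennreal (M k (norm (c k) / B)) \<le> ennreal (\<Sum>i\<in>I. w i * M k (norm (d i k) / s i))"
      by (rule ennreal_leI)
    also have "\<dots> = (\<Sum>i\<in>I. ennreal (w i) * ennreal (M k (norm (d i k) / s i)))"
      using \<open>B > 0\<close> a s_pos orlicz_fun_nonneg[OF M]
      by (intro ennreal_sum_mult) (auto simp: w_def less_imp_le)
    finally show ?thesis .
  qed
  then have "(\<Sum>\<^sub>\<infinity>k. ennreal (M k (norm (c k) / B))) \<le>
             (\<Sum>i\<in>I. ennreal (w i) * (\<Sum>\<^sub>\<infinity>k. ennreal (M k (norm (d i k) / s i))))"
    using I(1) by (intro infsum_le_weighted_sum_ennreal)
  also have "\<dots> \<le> (\<Sum>i\<in>I. ennreal (w i) * 1)"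
    using s unfolding lux_admissible_def by (intro sum_mono mult_left_mono) auto
  also have "\<dots> = ennreal (\<Sum>i\<in>I. w i)"
    using \<open>B > 0\<close> a s_pos by (simp add: w_def less_imp_le sum_ennreal)
  also have "(\<Sum>i\<in>I. w i) = 1"
    using \<open>B > 0\<close> unfolding w_def by (simp add: B_def flip: sum_divide_distrib)
  finally have "(\<Sum>\<^sub>\<infinity>k. ennreal (M k (norm (c k) / B))) \<le> 1"
    by simp
  with \<open>B > 0\<close> show ?thesis
    unfolding lux_admissible_def B_def by simp
qed

lemma lux_norm_le_weighted_sum:
  assumes M: "\<And>k. orlicz_fun (M k)"
    and "finite I" and a: "\<And>i. i \<in> I \<Longrightarrow> a i \<ge> 0"
    and dom: "\<And>k. norm (c k) \<le> (\<Sum>i\<in>I. a i * norm (d i k))"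
  shows "lux_norm M c \<le> (\<Sum>i\<in>I. ennreal (a i) * lux_norm M (d i))"
proof -
  define J where "J = {i\<in>I. a i > 0}"
  have J: "finite J" "J \<subseteq> I"
    using \<open>finite I\<close> unfolding J_def by auto
  have dom_J: "norm (c k) \<le> (\<Sum>i\<in>J. a i * norm (d i k))" for k
  proof -
    have "(\<Sum>i\<in>I. a i * norm (d i k)) = (\<Sum>i\<in>J. a i * norm (d i k))"
      using \<open>finite I\<close> J a by (intro sum.mono_neutral_right) (auto simp: J_def less_le)
    with dom[of k] show ?thesis by simp
  qed
  have "lux_norm M c \<le> (\<Sum>i\<in>J. ennreal (a i) * lux_norm M (d i))"
  proof (cases "J = {}")
    case True
    then have "c = (\<lambda>_. 0)"
      using dom_J by auto
    then show ?thesis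
      using lux_norm_zero[OF M] by simp
  next
    case False
    show ?thesis
      unfolding lux_norm_eq_INF
    proof (rule le_sum_weighted_INF_ennreal)
      fix T assume T: "\<And>i. i \<in> J \<Longrightarrow> T i \<in> lux_admissible M (d i)"
      then have "(\<Sum>i\<in>J. a i * T i) \<in> lux_admissible M c"
        using M J False dom_J by (intro lux_admissible_weighted_sum) (auto simp: J_def)
      then have "(INF s\<in>lux_admissible M c. ennreal s) \<le> ennreal (\<Sum>i\<in>J. a i * T i)"
        by (rule INF_lower)
      also have "\<dots> = (\<Sum>i\<in>J. ennreal (a i) * ennreal (T i))"
        using T by (intro ennreal_sum_mult) (auto simp: J_def lux_admissible_def less_imp_le)
      finally show "(INF s\<in>lux_admissible M c. ennreal s) \<le> \<dots>" .
    qed (use J in \<open>auto simp: J_def\<close>)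
  qed
  also have "\<dots> \<le> (\<Sum>i\<in>I. ennreal (a i) * lux_norm M (d i))"
    using J \<open>finite I\<close> by (intro sum_mono2) auto
  finally show ?thesis .
qed

lemma scaled_grid_point_mem:
  assumes "0 \<le> \<tau>" and "\<nu> \<le> n"
  shows "\<tau> * real \<nu> / real n \<in> {0..\<tau>}"
proof (cases "n = 0")
  case False
  have "\<tau> * real \<nu> \<le> \<tau> * real n"
    using assms by (intro mult_left_mono) auto
  with False have "\<tau> * real \<nu> / real n \<le> \<tau>"
    by (simp add: pos_divide_le_eq)
  with assms(1) show ?thesis
    by simp
qed (use assms(1) in simp)

lemma phi_increment_nonneg:
  fixes \<phi> :: "real \<Rightarrow> real"
  assumes "mono_on {0..\<tau>} \<phi>" and "0 \<le> \<tau>" and "\<nu> \<in> {1..n}"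
  shows "0 \<le> \<phi> (\<tau> * real \<nu> / real n) - \<phi> (\<tau> * (real \<nu> - 1) / real n)"
proof -
  have "\<nu> - 1 \<le> n" and "\<nu> \<le> n"
    using assms(3) by auto
  then have lo: "\<tau> * real (\<nu> - 1) / real n \<in> {0..\<tau>}" and hi: "\<tau> * real \<nu> / real n \<in> {0..\<tau>}"
    using assms(2) by (blast intro: scaled_grid_point_mem)+
  have "\<tau> * real (\<nu> - 1) \<le> \<tau> * real \<nu>"
    using assms(2) by (intro mult_left_mono) auto
  then have "\<tau> * real (\<nu> - 1) / real n \<le> \<tau> * real \<nu> / real n"
    by (rule divide_right_mono) simp
  then have "\<phi> (\<tau> * real (\<nu> - 1) / real n) \<le> \<phi> (\<tau> * real \<nu> / real n)"
    by (rule mono_onD[OF assms(1) lo hi])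
  moreover have "real (\<nu> - 1) = real \<nu> - 1"
    using assms(3) by (simp add: of_nat_diff)
  ultimately show ?thesis
    by simp
qed

lemma phi_le_sum_increments:
  fixes \<phi> :: "real \<Rightarrow> real"
  assumes even: "\<And>t. \<phi> (- t) = \<phi> t" and "\<phi> 0 = 0"
    and mono: "mono_on {0..\<tau>} \<phi>" and max: "\<And>t. \<phi> t \<le> \<phi> \<tau>" and "0 \<le> \<tau>"
    and x: "\<bar>x\<bar> \<le> \<tau> * real m / real n"
  shows "\<phi> x \<le> (\<Sum>\<nu>=1..min m n. \<phi> (\<tau> * real \<nu> / real n) - \<phi> (\<tau> * (real \<nu> - 1) / real n))"
proof -
  define G where "G j = \<phi> (\<tau> * real j / real n)" for j
  have "\<phi> x = \<phi> \<bar>x\<bar>"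
    using even by (simp add: abs_if)
  also have "\<dots> \<le> G (min m n)"
  proof (cases "m \<le> n")
    case True
    have grid: "\<tau> * real m / real n \<in> {0..\<tau>}"
      using scaled_grid_point_mem[OF \<open>0 \<le> \<tau>\<close> True] .
    then have "\<bar>x\<bar> \<in> {0..\<tau>}"
      using x by simp
    then show ?thesis
      using mono_onD[OF mono _ grid x] True unfolding G_def by simp
  next
    case False
    show ?thesis
    proof (cases "n = 0")
      case True
      with x have "x = 0"
        by simp
      with True show ?thesis
        by (simp add: G_def)
    next
      case False
      with \<open>\<not> m \<le> n\<close> show ?thesis
        using max[of "\<bar>x\<bar>"] by (simp add: G_def)
    qed
  qed
  also have "\<dots> = (\<Sum>\<nu>\<in>{Suc 0..min m n}. G \<nu> - G (\<nu> - 1))"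
    using \<open>\<phi> 0 = 0\<close> by (subst sum_telescope'') (simp_all add: G_def)
  also have "\<dots> = (\<Sum>\<nu>=1..min m n. \<phi> (\<tau> * real \<nu> / real n) - \<phi> (\<tau> * (real \<nu> - 1) / real n))"
  proof (intro sum.cong)
    fix \<nu> assume "\<nu> \<in> {1..min m n}"
    then have "real (\<nu> - 1) = real \<nu> - 1"
      by (simp add: of_nat_diff)
    then show "G \<nu> - G (\<nu> - 1) = \<phi> (\<tau> * real \<nu> / real n) - \<phi> (\<tau> * (real \<nu> - 1) / real n)"
      unfolding G_def by simp
  qed simp
  finally show ?thesis .
qed

lemma norm_Delta_phi_le_sum:
  assumes "\<phi> \<in> Phi_class" and "0 \<le> \<tau>" and mono: "mono_on {0..\<tau>} \<phi>" and max: "\<forall>t. \<phi> t \<le> \<phi> \<tau>"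
    and h: "\<bar>h\<bar> \<le> \<tau> / real n"
    and T: "\<And>\<nu>. \<nu> \<in> {1..n} \<Longrightarrow> T \<nu> \<in> trig_polys (\<nu> - 1)"
  shows "norm (Delta_phi \<phi> h f k) \<le>
    (\<Sum>\<nu>=1..n. (\<phi> (\<tau> * real \<nu> / real n) - \<phi> (\<tau> * (real \<nu> - 1) / real n))
                * norm (fourier_coeff (\<lambda>x. f x - T \<nu> x) k))"
proof -
  define a where "a \<nu> = \<phi> (\<tau> * real \<nu> / real n) - \<phi> (\<tau> * (real \<nu> - 1) / real n)" for \<nu>
  define m where "m = nat \<bar>k\<bar>"
  have \<phi>: "\<And>t. \<phi> (- t) = \<phi> t" "\<phi> 0 = 0" "\<And>t. \<phi> t \<ge> 0"
    using assms(1) unfolding Phi_class_def by auto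
  have "\<bar>of_int k * h\<bar> \<le> real m * (\<tau> / real n)"
    unfolding abs_mult m_def using h by (intro mult_mono) auto
  then have "\<bar>of_int k * h\<bar> \<le> \<tau> * real m / real n"
    by (simp add: mult.commute)
  then have "\<phi> (of_int k * h) \<le> (\<Sum>\<nu>=1..min m n. a \<nu>)"
    unfolding a_def using \<phi> max \<open>0 \<le> \<tau>\<close>
    by (intro phi_le_sum_increments[OF _ _ mono]) auto
  then have "norm (Delta_phi \<phi> h f k) \<le> (\<Sum>\<nu>=1..min m n. a \<nu>) * norm (fourier_coeff f k)"
    unfolding Delta_phi_def using \<phi>(3) by (simp add: norm_mult mult_right_mono)
  also have "\<dots> = (\<Sum>\<nu>=1..min m n. a \<nu> * norm (fourier_coeff (\<lambda>x. f x - T \<nu> x) k))"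
    unfolding sum_distrib_right
  proof (intro sum.cong refl)
    fix \<nu> assume "\<nu> \<in> {1..min m n}"
    then have "T \<nu> \<in> trig_polys (\<nu> - 1)" and "\<bar>k\<bar> > int (\<nu> - 1)"
      using T unfolding m_def by auto
    then show "a \<nu> * norm (fourier_coeff f k) = a \<nu> * norm (fourier_coeff (\<lambda>x. f x - T \<nu> x) k)"
      by (simp add: fourier_coeff_diff_trig_poly)
  qed
  also have "\<dots> \<le> (\<Sum>\<nu>=1..n. a \<nu> * norm (fourier_coeff (\<lambda>x. f x - T \<nu> x) k))"
    using phi_increment_nonneg[OF mono \<open>0 \<le> \<tau>\<close>] unfolding a_def by (intro sum_mono2) auto
  finally show ?thesis
    unfolding a_def .
qed

theorem theorem3:
  fixes M :: "int \<Rightarrow> real \<Rightarrow> real" and N :: "(int \<Rightarrow> complex) \<Rightarrow> ennreal"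
    and f :: "real \<Rightarrow> complex" and \<phi> :: "real \<Rightarrow> real" and \<tau> :: real and n :: nat
  assumes "\<And>k. orlicz_fun (M k)"
    and "N = lux_norm M \<or> N = orlicz_norm M"
    and "in_S M f"
    and "\<phi> \<in> Phi_class"
    and "\<tau> > 0"
    and "mono_on {0..\<tau>} \<phi>"
    and "\<forall>t. \<phi> t \<le> \<phi> \<tau>"
    and "n \<ge> 1"
  shows "modulus N \<phi> f (\<tau> / real n) \<le>
    (\<Sum>\<nu>=1..n. ennreal (\<phi> (\<tau> * real \<nu> / real n) - \<phi> (\<tau> * (real \<nu> - 1) / real n))
                  * best_approx N f \<nu>)"
proof -
  \<comment> \<open>Unused: \<open>in_S M f\<close> (infinite norms are harmless in \<open>ennreal\<close>) and \<open>n \<ge> 1\<close>.\<close>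
  let ?a = "\<lambda>\<nu>. \<phi> (\<tau> * real \<nu> / real n) - \<phi> (\<tau> * (real \<nu> - 1) / real n)"
  have a_nonneg: "\<And>\<nu>. \<nu> \<in> {1..n} \<Longrightarrow> ?a \<nu> \<ge> 0"
    using assms(5,6) by (intro phi_increment_nonneg) auto
  have N_le: "N c \<le> (\<Sum>\<nu>=1..n. ennreal (?a \<nu>) * N (d \<nu>))"
    if "\<And>k. norm (c k) \<le> (\<Sum>\<nu>=1..n. ?a \<nu> * norm (d \<nu> k))" for c d
    using assms(2) lux_norm_le_weighted_sum[OF assms(1) _ a_nonneg that]
      orlicz_norm_le_weighted_sum[OF _ a_nonneg that] by auto
  show ?thesis
    unfolding modulus_def best_approx_def
  proof (rule SUP_least)
    fix h assume "h \<in> {h. \<bar>h\<bar> \<le> \<tau> / real n}"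
    then show "N (Delta_phi \<phi> h f) \<le>
      (\<Sum>\<nu>=1..n. ennreal (?a \<nu>) * (INF t\<in>trig_polys (\<nu> - 1). N (fourier_coeff (\<lambda>x. f x - t x))))"
      using assms(4-7) zero_in_trig_polys
      by (intro le_sum_weighted_INF_ennreal N_le norm_Delta_phi_le_sum) auto
  qed
qed

end
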